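(* Let $A$ be an associative commutative $\mathbb{C}$-algebra and $\Psi : A \to A$ an algebra automorphism, and regard $A$ as a subalgebra of the crossed product $A \rtimes_{\Psi} \mathbb{Z}$ via $a \mapsto a\delta^0$. Then the commutant $A' = \{ f \in A \rtimes_{\Psi}\mathbb{Z} : f * a = a * f \text{ for all } a \in A\}$ of $A$ in $A \rtimes_{\Psi} \mathbb{Z}$ is abelian; consequently $A'$ is the unique maximal abelian subalgebra of $A \rtimes_{\Psi} \mathbb{Z}$ containing $A$.
   Context: The crossed product $A \rtimes_{\Psi} \mathbb{Z}$ is the set of functions $f : \mathbb{Z} \to A$ with $f(n)=0$ for all but finitely many $n$, with pointwise addition and scalar multiplication and with multiplication given by twisted convolution $(f*g)(n) = \sum_{k\in\mathbb{Z}} f(k)\cdot \Psi^k(g(n-k))$, where $\Psi^k$ is the $k$-fold iterate of $\Psi$ (negative $k$ meaning iterates of $\Psi^{-1}$). Elements are written $f = \sum_n f_n \delta^n$ with $f_n = f(n)$, and $(f_n\delta^n)*(g_m\delta^m) = f_n \Psi^n(g_m)\delta^{n+m}$. *)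

theory Defs
  imports Complex_Main
begin

text \<open>An associative commutative complex algebra is modelled as a type 'a of class
comm_ring (associative, commutative, not necessarily unital) together with a scalar
multiplication sc by complex numbers making it a complex vector space, compatible
with the multiplication.\<close>

definition is_C_algebra :: "(complex \<Rightarrow> 'a::comm_ring \<Rightarrow> 'a) \<Rightarrow> bool" where
  "is_C_algebra sc \<longleftrightarrow> module sc \<and>
     (\<forall>c x y. sc c (x * y) = sc c x * y \<and> sc c (x * y) = x * sc c y)"

definition is_alg_automorphism ::
  "(complex \<Rightarrow> 'a::comm_ring \<Rightarrow> 'a) \<Rightarrow> ('a \<Rightarrow> 'a) \<Rightarrow> bool" where
  "is_alg_automorphism sc \<Psi> \<longleftrightarrow> bij \<Psi> \<and>
     (\<forall>x y. \<Psi> (x + y) = \<Psi> x + \<Psi> y) \<and>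
     (\<forall>x y. \<Psi> (x * y) = \<Psi> x * \<Psi> y) \<and>
     (\<forall>c x. \<Psi> (sc c x) = sc c (\<Psi> x))"

definition iter_int :: "('a \<Rightarrow> 'a) \<Rightarrow> int \<Rightarrow> 'a \<Rightarrow> 'a" where
  "iter_int \<Psi> k = (if 0 \<le> k then \<Psi> ^^ nat k else (inv \<Psi>) ^^ nat (- k))"

definition crossed :: "(int \<Rightarrow> 'a::zero) set" where
  "crossed = {f. finite {n. f n \<noteq> 0}}"

definition cp_add :: "(int \<Rightarrow> 'a::plus) \<Rightarrow> (int \<Rightarrow> 'a) \<Rightarrow> int \<Rightarrow> 'a" where
  "cp_add f g = (\<lambda>n. f n + g n)"

definition cp_scale :: "(complex \<Rightarrow> 'a \<Rightarrow> 'a) \<Rightarrow> complex \<Rightarrow> (int \<Rightarrow> 'a) \<Rightarrow> int \<Rightarrow> 'a" where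
  "cp_scale sc c f = (\<lambda>n. sc c (f n))"

text \<open>Twisted convolution (f*g)(n) = sum_k f(k) Psi^k(g(n-k)); the sum is over the
finite support of f (other terms vanish).\<close>
definition cp_mult :: "('a::comm_ring \<Rightarrow> 'a) \<Rightarrow> (int \<Rightarrow> 'a) \<Rightarrow> (int \<Rightarrow> 'a) \<Rightarrow> int \<Rightarrow> 'a" where
  "cp_mult \<Psi> f g = (\<lambda>n. \<Sum>k\<in>{k. f k \<noteq> 0}. f k * iter_int \<Psi> k (g (n - k)))"

definition cp_emb :: "'a::zero \<Rightarrow> int \<Rightarrow> 'a" where
  "cp_emb a = (\<lambda>n. if n = 0 then a else 0)"

definition commutant :: "('a::comm_ring \<Rightarrow> 'a) \<Rightarrow> (int \<Rightarrow> 'a) set" where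
  "commutant \<Psi> = {f \<in> crossed. \<forall>a. cp_mult \<Psi> f (cp_emb a) = cp_mult \<Psi> (cp_emb a) f}"

definition is_subalgebra ::
  "(complex \<Rightarrow> 'a::comm_ring \<Rightarrow> 'a) \<Rightarrow> ('a \<Rightarrow> 'a) \<Rightarrow> (int \<Rightarrow> 'a) set \<Rightarrow> bool" where
  "is_subalgebra sc \<Psi> B \<longleftrightarrow> B \<subseteq> crossed \<and> (\<lambda>_. 0) \<in> B \<and>
     (\<forall>f\<in>B. \<forall>g\<in>B. cp_add f g \<in> B \<and> cp_mult \<Psi> f g \<in> B) \<and>
     (\<forall>c. \<forall>f\<in>B. cp_scale sc c f \<in> B)"

definition is_abelian :: "('a::comm_ring \<Rightarrow> 'a) \<Rightarrow> (int \<Rightarrow> 'a) set \<Rightarrow> bool" where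
  "is_abelian \<Psi> B \<longleftrightarrow> (\<forall>f\<in>B. \<forall>g\<in>B. cp_mult \<Psi> f g = cp_mult \<Psi> g f)"

definition is_max_abelian_containing_A ::
  "(complex \<Rightarrow> 'a::comm_ring \<Rightarrow> 'a) \<Rightarrow> ('a \<Rightarrow> 'a) \<Rightarrow> (int \<Rightarrow> 'a) set \<Rightarrow> bool" where
  "is_max_abelian_containing_A sc \<Psi> B \<longleftrightarrow>
     is_subalgebra sc \<Psi> B \<and> is_abelian \<Psi> B \<and> range cp_emb \<subseteq> B \<and>
     (\<forall>C. is_subalgebra sc \<Psi> C \<and> is_abelian \<Psi> C \<and> B \<subseteq> C \<longrightarrow> C = B)"

end

theory Submission
  imports Defs
begin

text \<open>Since A is commutative, f commutes with every a \<delta>^0 exactly when each coefficient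
satisfies f_n \<Psi>^n(a) = f_n a. For such f the twist disappears from f * g, which becomes the
ordinary convolution of coefficient sequences and is therefore commutative. Conversely,
every element of an abelian subalgebra containing A commutes with A, so every such
subalgebra lies in the commutant; as the commutant is itself a subalgebra, it is the
unique maximal one.\<close>

lemma iter_int_id [simp]: "iter_int id k = id"
  by (simp add: iter_int_def)

lemma iter_int_0 [simp]: "iter_int \<Psi> 0 = id"
  by (simp add: iter_int_def)

lemma iter_int_succ:
  assumes "bij \<Psi>"
  shows "iter_int \<Psi> (k + 1) x = \<Psi> (iter_int \<Psi> k x)"
proof (cases "0 \<le> k")
  case True
  then have "nat (k + 1) = Suc (nat k)" by simp
  with True show ?thesis by (simp add: iter_int_def)
next
  case False
  then have "k = -1 \<or> nat (- k) = Suc (nat (- (k + 1)))" by linarith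
  with False show ?thesis
    by (auto simp: iter_int_def surj_f_inv_f[OF bij_is_surj[OF assms]])
qed

lemma iter_int_pred:
  assumes "bij \<Psi>"
  shows "iter_int \<Psi> (k - 1) x = inv \<Psi> (iter_int \<Psi> k x)"
  using iter_int_succ[OF assms, of "k - 1" x] assms by (simp add: bij_is_inj)

lemma iter_int_add:
  assumes "bij \<Psi>"
  shows "iter_int \<Psi> (k + m) x = iter_int \<Psi> k (iter_int \<Psi> m x)"
proof (induction k rule: int_induct[where k = 0])
  case base
  show ?case by simp
next
  case (step1 i)
  then show ?case using iter_int_succ[OF assms, of "i + m"] iter_int_succ[OF assms, of i]
    by (simp add: ac_simps)
next
  case (step2 i)
  then show ?case using iter_int_pred[OF assms, of "i + m"] iter_int_pred[OF assms, of i]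
    by (simp add: algebra_simps)
qed

lemma cp_mult_emb_left: "cp_mult \<Psi> (cp_emb a) f n = a * f n"
proof (cases "a = 0")
  case False
  then have "{k. cp_emb a k \<noteq> 0} = {0}" by (auto simp: cp_emb_def)
  then show ?thesis by (simp add: cp_mult_def cp_emb_def)
qed (simp add: cp_mult_def cp_emb_def)

lemma cp_mult_id_commute:
  fixes f g :: "int \<Rightarrow> 'a::comm_ring"
  assumes "f \<in> crossed" and "g \<in> crossed"
  shows "cp_mult id f g = cp_mult id g f"
proof
  fix n
  have sum_over_pairs: "cp_mult id u v n = (\<Sum>k\<in>{k. u k \<noteq> 0 \<and> v (n - k) \<noteq> 0}. u k * v (n - k))"
    if "u \<in> crossed" for u v :: "int \<Rightarrow> 'a"
    unfolding cp_mult_def iter_int_id id_apply using that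
    by (intro sum.mono_neutral_right) (auto simp: crossed_def)
  show "cp_mult id f g n = cp_mult id g f n"
    unfolding sum_over_pairs[OF assms(1)] sum_over_pairs[OF assms(2)]
    by (rule sum.reindex_bij_witness[where i = "\<lambda>k. n - k" and j = "\<lambda>k. n - k"])
      (auto simp: mult.commute)
qed

lemma abelian_subset_commutant:
  assumes "B \<subseteq> crossed" and "is_abelian \<Psi> B" and "range cp_emb \<subseteq> B"
  shows "B \<subseteq> commutant \<Psi>"
  using assms unfolding commutant_def is_abelian_def by blast

locale ring_automorphism =
  fixes \<Psi> :: "'a::comm_ring \<Rightarrow> 'a"
  assumes bij: "bij \<Psi>"
    and hom_add: "\<Psi> (x + y) = \<Psi> x + \<Psi> y"
    and hom_mult: "\<Psi> (x * y) = \<Psi> x * \<Psi> y"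
begin

lemma hom_zero: "\<Psi> 0 = 0"
  using hom_add[of 0 0] by simp

lemma inv_hom_zero: "inv \<Psi> 0 = 0"
  using bij hom_zero by (metis bij_inv_eq_iff)

lemma inv_hom_mult: "inv \<Psi> (x * y) = inv \<Psi> x * inv \<Psi> y"
  using bij hom_mult by (metis bij_inv_eq_iff)

lemma iter_int_zero: "iter_int \<Psi> k 0 = 0"
  by (induction k rule: int_induct[where k = 0])
    (simp_all add: iter_int_succ[OF bij] iter_int_pred[OF bij] hom_zero inv_hom_zero)

lemma iter_int_mult: "iter_int \<Psi> k (x * y) = iter_int \<Psi> k x * iter_int \<Psi> k y"
  by (induction k arbitrary: x y rule: int_induct[where k = 0])
    (simp_all add: iter_int_succ[OF bij] iter_int_pred[OF bij] hom_mult inv_hom_mult)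

lemma cp_mult_emb_right:
  assumes "f \<in> crossed"
  shows "cp_mult \<Psi> f (cp_emb a) n = f n * iter_int \<Psi> n a"
proof -
  have "cp_mult \<Psi> f (cp_emb a) n =
      (\<Sum>k\<in>{k. f k \<noteq> 0}. if k = n then f n * iter_int \<Psi> n a else 0)"
    unfolding cp_mult_def cp_emb_def by (rule sum.cong) (auto simp: iter_int_zero)
  then show ?thesis
    using assms by (simp add: crossed_def)
qed

lemma commutant_iff:
  "f \<in> commutant \<Psi> \<longleftrightarrow> f \<in> crossed \<and> (\<forall>n a. f n * iter_int \<Psi> n a = f n * a)"
  by (auto simp: commutant_def fun_eq_iff cp_mult_emb_right cp_mult_emb_left mult.commute)

lemma cp_mult_commutant_untwisted:
  assumes "f \<in> commutant \<Psi>"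
  shows "cp_mult \<Psi> f g = cp_mult id f g"
  using assms by (simp add: commutant_iff cp_mult_def)

lemma commutant_abelian: "is_abelian \<Psi> (commutant \<Psi>)"
  unfolding is_abelian_def
  by (metis cp_mult_commutant_untwisted cp_mult_id_commute commutant_iff)

lemma cp_mult_crossed:
  assumes "f \<in> crossed" and "g \<in> crossed"
  shows "cp_mult \<Psi> f g \<in> crossed"
proof -
  let ?F = "{k. f k \<noteq> 0}" and ?G = "{k. g k \<noteq> 0}"
  have "cp_mult \<Psi> f g n = 0" if "n \<notin> (\<lambda>(k, m). k + m) ` (?F \<times> ?G)" for n
    unfolding cp_mult_def
  proof (intro sum.neutral ballI)
    fix k assume "k \<in> ?F"
    with that have "g (n - k) = 0" by force
    then show "f k * iter_int \<Psi> k (g (n - k)) = 0" by (simp add: iter_int_zero)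
  qed
  then have "{n. cp_mult \<Psi> f g n \<noteq> 0} \<subseteq> (\<lambda>(k, m). k + m) ` (?F \<times> ?G)" by blast
  with assms show ?thesis
    unfolding crossed_def by (auto intro: finite_subset)
qed

lemma twisted_commuting_mult:
  assumes "\<And>z. x * iter_int \<Psi> k z = x * z" and "\<And>z. y * iter_int \<Psi> m z = y * z"
  shows "x * y * iter_int \<Psi> (k + m) z = x * y * z"
proof -
  have "x * y * iter_int \<Psi> (k + m) z = x * iter_int \<Psi> k y * iter_int \<Psi> k (iter_int \<Psi> m z)"
    by (simp add: assms(1) iter_int_add[OF bij])
  also have "\<dots> = x * iter_int \<Psi> k (y * iter_int \<Psi> m z)"
    by (simp add: iter_int_mult mult.assoc)
  also have "\<dots> = x * (y * iter_int \<Psi> m z)"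
    by (rule assms(1))
  finally show ?thesis by (simp add: assms(2) mult.assoc)
qed

lemma cp_mult_commutant:
  assumes f: "f \<in> commutant \<Psi>" and g: "g \<in> commutant \<Psi>"
  shows "cp_mult \<Psi> f g \<in> commutant \<Psi>"
proof -
  have coeff: "\<And>n z. f n * iter_int \<Psi> n z = f n * z" "\<And>n z. g n * iter_int \<Psi> n z = g n * z"
    using f g by (auto simp: commutant_iff)
  have "cp_mult \<Psi> f g n * iter_int \<Psi> n a = cp_mult \<Psi> f g n * a" for n a
  proof -
    have "f k * g (n - k) * iter_int \<Psi> n a = f k * g (n - k) * a" for k
      using twisted_commuting_mult[OF coeff(1,2), of k "n - k"] by simp
    then show ?thesis
      unfolding cp_mult_commutant_untwisted[OF f] by (simp add: cp_mult_def sum_distrib_right)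
  qed
  with f g show ?thesis
    by (simp add: commutant_iff cp_mult_crossed)
qed

lemma emb_commutant: "range cp_emb \<subseteq> commutant \<Psi>"
proof -
  have "finite {n. cp_emb a n \<noteq> 0}" for a :: 'a
    by (rule finite_subset[of _ "{0}"]) (auto simp: cp_emb_def)
  then show ?thesis
    by (auto simp: commutant_iff crossed_def cp_emb_def)
qed

lemma commutant_subalgebra:
  assumes "is_C_algebra sc"
  shows "is_subalgebra sc \<Psi> (commutant \<Psi>)"
  unfolding is_subalgebra_def
proof (intro conjI ballI allI)
  have sc_zero: "sc c 0 = 0" and sc_mult: "sc c (x * y) = sc c x * y" for c x y
    using assms module.scale_zero_right by (auto simp: is_C_algebra_def)
  show "commutant \<Psi> \<subseteq> crossed" by (auto simp: commutant_def)
  show "(\<lambda>_. 0) \<in> commutant \<Psi>" by (simp add: commutant_iff crossed_def)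
  fix f assume f: "f \<in> commutant \<Psi>"
  then have fin_f: "finite {n. f n \<noteq> 0}" by (simp add: commutant_iff crossed_def)
  show "cp_scale sc c f \<in> commutant \<Psi>" for c
  proof -
    have "finite {n. sc c (f n) \<noteq> 0}"
      by (rule finite_subset[OF _ fin_f]) (auto simp: sc_zero)
    with f show ?thesis
      by (auto simp: commutant_iff crossed_def cp_scale_def simp flip: sc_mult)
  qed
  fix g assume g: "g \<in> commutant \<Psi>"
  show "cp_mult \<Psi> f g \<in> commutant \<Psi>" using cp_mult_commutant[OF f g] .
  have "finite {n. g n \<noteq> 0}" using g by (simp add: commutant_iff crossed_def)
  with fin_f have "finite {n. f n + g n \<noteq> 0}"
    by (rule finite_subset[rotated, OF finite_UnI]) auto
  with f g show "cp_add f g \<in> commutant \<Psi>"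
    by (simp add: commutant_iff crossed_def cp_add_def distrib_right)
qed

end

theorem proposition2p1:
  fixes sc :: "complex \<Rightarrow> 'a::comm_ring \<Rightarrow> 'a" and \<Psi> :: "'a \<Rightarrow> 'a"
  assumes "is_C_algebra sc"
    and "is_alg_automorphism sc \<Psi>"
  shows "is_abelian \<Psi> (commutant \<Psi>) \<and>
         is_max_abelian_containing_A sc \<Psi> (commutant \<Psi>) \<and>
         (\<forall>B. is_max_abelian_containing_A sc \<Psi> B \<longrightarrow> B = commutant \<Psi>)"
proof -
  interpret ring_automorphism \<Psi>
    using assms(2) by unfold_locales (auto simp: is_alg_automorphism_def)
  have subalg: "is_subalgebra sc \<Psi> (commutant \<Psi>)"
    using commutant_subalgebra[OF assms(1)] .
  have le_commutant: "B \<subseteq> commutant \<Psi>"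
    if "is_subalgebra sc \<Psi> B" "is_abelian \<Psi> B" "range cp_emb \<subseteq> B" for B
    using that abelian_subset_commutant by (auto simp: is_subalgebra_def)
  have max: "is_max_abelian_containing_A sc \<Psi> (commutant \<Psi>)"
    unfolding is_max_abelian_containing_A_def
    using subalg commutant_abelian emb_commutant le_commutant by blast
  moreover have "B = commutant \<Psi>" if "is_max_abelian_containing_A sc \<Psi> B" for B
    using that subalg commutant_abelian le_commutant
    unfolding is_max_abelian_containing_A_def by blast
  ultimately show ?thesis
    using commutant_abelian by blast
qed

end
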